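(* Assume (A.a). Let $\beta\in[0,1)$, $\lambda\in[0,\frac{\beta}{1-\beta}]$, and step sizes $\alpha_k\in\big(0,\frac{(1-\beta)(1-\beta^m)}{4Lm}\big]$ for all $k$, and let the sequences be generated by RRM. Let $\eta:=\frac{1+2\beta^m}{3}\in[\frac13,1)$. (a) For all $k\ge1$ (arbitrary permutations), \[ \|z^{k+1}-x^{k+1}\|^2\le\eta\|z^k-x^k\|^2+\frac{\beta^2m^2\alpha_k^2\{4\|\nabla f(z^k)\|^2+7L[f(z^k)-\bar f]\}}{(1-\beta)^2(1-\beta^m)}. \] (b) If in addition (A.c) holds, then for all $k\ge1$, \[ \mathbb E_k[\|z^{k+1}-x^{k+1}\|^2]\le\eta\|z^k-x^k\|^2+\frac{\beta^2m^2\alpha_k^2\{4\|\nabla f(z^k)\|^2+7n^{-1}L[f(z^k)-\bar f]\}}{(1-\beta)^2(1-\beta^m)}. \]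
   Context: Let $n,d\in\mathbb N$, $f_1,\dots,f_n:\mathbb R^d\to\mathbb R$ continuously differentiable, $f:=\frac1n\sum_{i=1}^n f_i$, $[n]:=\{1,\dots,n\}$. Fix a mini-batch size $b\in\mathbb N$ with $m:=n/b\in\mathbb N$. Random reshuffling with momentum (RRM) with step sizes $\{\alpha_k\}_{k\ge1}\subset(0,\infty)$ and parameters $\beta,\lambda$ generates sequences as follows: start with $x^1=\tilde x^1\in\mathbb R^d$; for each $k=1,2,\dots$ choose a permutation $\pi^k=(\pi^k_1,\dots,\pi^k_n)$ of $[n]$, set $y_0^k=\tilde x^k$, $y_1^k=x^k$, and for $i=1,\dots,m$ compute $\hat y_i^k=y_i^k+\lambda(y_i^k-y_{i-1}^k)$, $d_i^k=\frac1b\sum_{j=(i-1)b+1}^{ib}\nabla f_{\pi^k_j}(\hat y_i^k)$, $y_{i+1}^k=y_i^k-\alpha_kd_i^k+\beta(y_i^k-y_{i-1}^k)$; then set $\tilde x^{k+1}=y_m^k$, $x^{k+1}=y_{m+1}^k$. The proxy iterates are $z^k:=\frac{1}{1-\beta}x^k-\frac{\beta}{1-\beta}\tilde x^k$. Assumption (A.a): there are $L>0$ and $\bar f\in\mathbb R$ such that each $\nabla f_i$ is $L$-Lipschitz and $f_i(x)\ge\bar f$ for all $x\in\mathbb R^d$, $i\in[n]$. Assumption (A.c): the permutations $\pi^1,\pi^2,\dots$ are independent and each is uniformly distributed over all permutations of $[n]$. $\mathbb E_k[\cdot]$ denotes conditional expectation given $\pi^1,\dots,\pi^{k-1}$ (so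 $x^k,\tilde x^k,z^k$ are fixed and only $\pi^k$ is random). *)

theory Defs
  imports "HOL-Analysis.Analysis" "HOL-Combinatorics.Permutations"
begin

text \<open>The state is the pair
  (y_{i-1}, y_i); the result is (y_i, y_{i+1}).  The permutation is a function p on {1..n},
  p j = pi_j; g i is the gradient of f_i.\<close>
definition rrm_step :: "real \<Rightarrow> real \<Rightarrow> real \<Rightarrow> nat \<Rightarrow> (nat \<Rightarrow> 'a \<Rightarrow> 'a::real_normed_vector)
    \<Rightarrow> (nat \<Rightarrow> nat) \<Rightarrow> nat \<Rightarrow> 'a \<times> 'a \<Rightarrow> 'a \<times> 'a" where
  "rrm_step alpha beta lam b g p i s =
     (let yprev = fst s; ycur = snd s;
          yhat = ycur + lam *\<^sub>R (ycur - yprev);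
          d = (1 / real b) *\<^sub>R (\<Sum>j = (i - 1) * b + 1 .. i * b. g (p j) yhat)
      in (ycur, ycur - alpha *\<^sub>R d + beta *\<^sub>R (ycur - yprev)))"

fun rrm_loop :: "real \<Rightarrow> real \<Rightarrow> real \<Rightarrow> nat \<Rightarrow> (nat \<Rightarrow> 'a \<Rightarrow> 'a::real_normed_vector)
    \<Rightarrow> (nat \<Rightarrow> nat) \<Rightarrow> nat \<Rightarrow> 'a \<times> 'a \<Rightarrow> 'a \<times> 'a" where
  "rrm_loop alpha beta lam b g p 0 s = s"
| "rrm_loop alpha beta lam b g p (Suc i) s =
     rrm_step alpha beta lam b g p (Suc i) (rrm_loop alpha beta lam b g p i s)"

text \<open>One epoch: from (tilde x^k, x^k) to (tilde x^{k+1}, x^{k+1}) = (y_m, y_{m+1}).\<close>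
definition rrm_epoch :: "real \<Rightarrow> real \<Rightarrow> real \<Rightarrow> nat \<Rightarrow> nat \<Rightarrow> (nat \<Rightarrow> 'a \<Rightarrow> 'a::real_normed_vector)
    \<Rightarrow> (nat \<Rightarrow> nat) \<Rightarrow> 'a \<times> 'a \<Rightarrow> 'a \<times> 'a" where
  "rrm_epoch alpha beta lam b m g p s = rrm_loop alpha beta lam b g p m s"

text \<open>The RRM iterates: rrm_seq ... k = (tilde x^k, x^k) for k \<ge> 1
  (the value at k = 0 is an irrelevant dummy).  perm k is the permutation of epoch k,
  alpha k the step size of epoch k.\<close>
fun rrm_seq :: "(nat \<Rightarrow> real) \<Rightarrow> real \<Rightarrow> real \<Rightarrow> nat \<Rightarrow> nat \<Rightarrow> (nat \<Rightarrow> 'a \<Rightarrow> 'a::real_normed_vector)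
    \<Rightarrow> (nat \<Rightarrow> nat \<Rightarrow> nat) \<Rightarrow> 'a \<Rightarrow> nat \<Rightarrow> 'a \<times> 'a" where
  "rrm_seq alpha beta lam b m g perm x1 0 = (x1, x1)"
| "rrm_seq alpha beta lam b m g perm x1 (Suc 0) = (x1, x1)"
| "rrm_seq alpha beta lam b m g perm x1 (Suc (Suc k)) =
     rrm_epoch (alpha (Suc k)) beta lam b m g (perm (Suc k)) (rrm_seq alpha beta lam b m g perm x1 (Suc k))"

definition rrm_z :: "real \<Rightarrow> 'a \<times> 'a \<Rightarrow> 'a::real_normed_vector" where
  "rrm_z beta s = (1 / (1 - beta)) *\<^sub>R snd s - (beta / (1 - beta)) *\<^sub>R fst s"

end

theory Submission
  imports Defs
begin

text \<open>
  Within one epoch the momentum v_i = y_{i+1} - y_i and the proxy point y_{i+1} + c v_i,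
  c = \<beta>/(1-\<beta>), depend linearly on the mini-batch gradients d_l; in particular
  z^{k+1} - x^{k+1} = \<beta>^m (z^k - x^k) - \<beta>\<kappa> \<Sum>_l \<beta>^{m-1-l} d_l with \<kappa> = \<alpha>/(1-\<beta>).
  Replacing each d_l by the mini-batch gradient D_l at z^k costs at most L times the deviation
  of the l-th extrapolation point from z^k, and these deviations obey a linear recursion which the
  step-size bound makes contractive. What remains are block sums \<Sum>_l w_l D_l with weights
  in [0,1]: their squared norm is at most m^2 times the mean of the squared gradient norms at z^k,
  and its average over all permutations (sampling without replacement) is at most
  m^2 |\<nabla>f(z^k)|^2 + (m/b) times that mean. Finally, the mean squared gradient norm is at most
  2L (f(z^k) - f_bar) by the descent lemma.
\<close>

section \<open>Functions with Lipschitz gradient\<close>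

lemma lipschitz_gradient_upper_bound:
  fixes F :: "'a::real_inner \<Rightarrow> real" and G :: "'a \<Rightarrow> 'a"
  assumes der: "\<And>x. (F has_derivative (\<lambda>h. G x \<bullet> h)) (at x)"
    and lip: "\<And>x y. norm (G x - G y) \<le> L * norm (x - y)"
  shows "F y \<le> F x + G x \<bullet> (y - x) + L / 2 * (norm (y - x))\<^sup>2"
proof -
  define h where "h = y - x"
  define \<phi> where "\<phi> t = F (x + t *\<^sub>R h) - t * (G x \<bullet> h) - L / 2 * t\<^sup>2 * (norm h)\<^sup>2" for t
  have F_deriv: "((\<lambda>t. F (x + t *\<^sub>R h)) has_field_derivative (G (x + t *\<^sub>R h) \<bullet> h)) (at t)" for t
  proof -
    have "((\<lambda>t. x + t *\<^sub>R h) has_derivative (\<lambda>s. s *\<^sub>R h)) (at t)"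
      by (auto intro!: derivative_eq_intros)
    from has_derivative_compose[OF this der]
    have "((\<lambda>t. F (x + t *\<^sub>R h)) has_derivative (\<lambda>s. G (x + t *\<^sub>R h) \<bullet> (s *\<^sub>R h))) (at t)"
      by (simp add: o_def)
    moreover have "(\<lambda>s. G (x + t *\<^sub>R h) \<bullet> (s *\<^sub>R h)) = (*) (G (x + t *\<^sub>R h) \<bullet> h)"
      by (simp add: fun_eq_iff mult.commute)
    ultimately show ?thesis
      by (simp add: has_field_derivative_def)
  qed
  have \<phi>_deriv: "DERIV \<phi> t :> (G (x + t *\<^sub>R h) - G x) \<bullet> h - L * t * (norm h)\<^sup>2" for t
    unfolding \<phi>_def
    by (auto intro!: derivative_eq_intros F_deriv simp: power2_eq_square inner_diff_left)
  have \<phi>'_nonpos: "(G (x + t *\<^sub>R h) - G x) \<bullet> h - L * t * (norm h)\<^sup>2 \<le> 0" if "0 \<le> t" for t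
  proof -
    have "(G (x + t *\<^sub>R h) - G x) \<bullet> h \<le> norm (G (x + t *\<^sub>R h) - G x) * norm h"
      by (rule norm_cauchy_schwarz)
    also have "\<dots> \<le> L * norm (t *\<^sub>R h) * norm h"
      using lip[of "x + t *\<^sub>R h" x] by (simp add: mult_right_mono)
    also have "\<dots> = L * t * (norm h)\<^sup>2"
      using that by (simp add: power2_eq_square)
    finally show ?thesis by simp
  qed
  have "\<phi> 1 \<le> \<phi> 0"
  proof (rule DERIV_nonpos_imp_nonincreasing[of 0 1 \<phi>])
    fix t :: real assume "0 \<le> t" "t \<le> 1"
    then show "\<exists>y. DERIV \<phi> t :> y \<and> y \<le> 0"
      using \<phi>_deriv[of t] \<phi>'_nonpos[of t] by blast
  qed simp
  then show ?thesis
    unfolding \<phi>_def h_def by simp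
qed

lemma norm_gradient_sq_le:
  fixes F :: "'a::real_inner \<Rightarrow> real" and G :: "'a \<Rightarrow> 'a"
  assumes der: "\<And>x. (F has_derivative (\<lambda>h. G x \<bullet> h)) (at x)"
    and lip: "\<And>x y. norm (G x - G y) \<le> L * norm (x - y)"
    and L: "L > 0" and lower: "\<And>x. fb \<le> F x"
  shows "(norm (G x))\<^sup>2 \<le> 2 * L * (F x - fb)"
proof -
  define y where "y = x - (1 / L) *\<^sub>R G x"
  have "fb \<le> F y" by (rule lower)
  also have "F y \<le> F x + G x \<bullet> (y - x) + L / 2 * (norm (y - x))\<^sup>2"
    by (rule lipschitz_gradient_upper_bound[OF der lip])
  also have "\<dots> = F x - (norm (G x))\<^sup>2 / (2 * L)"
    unfolding y_def using L by (simp add: dot_square_norm power2_eq_square field_simps)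
  finally show ?thesis
    using L by (simp add: field_simps)
qed

section \<open>Averages over all permutations\<close>

lemma sum_permutations_apply:
  assumes "p \<in> S"
  shows "real (card S) * (\<Sum>\<pi>\<in>{\<pi>. \<pi> permutes S}. F (\<pi> p))
       = real (card {\<pi>. \<pi> permutes S}) * (\<Sum>i\<in>S. (F i :: real))"
proof -
  let ?P = "{\<pi>. \<pi> permutes S}"
  have transposed: "(\<Sum>\<pi>\<in>?P. F (\<pi> p)) = (\<Sum>\<pi>\<in>?P. F (\<pi> p'))" if "p' \<in> S" for p'
    using sum_permutations_compose_right[OF permutes_swap_id[OF assms that], of "\<lambda>\<pi>. F (\<pi> p)"]
    by simp
  have "real (card S) * (\<Sum>\<pi>\<in>?P. F (\<pi> p)) = (\<Sum>p'\<in>S. \<Sum>\<pi>\<in>?P. F (\<pi> p))"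
    by simp
  also have "\<dots> = (\<Sum>p'\<in>S. \<Sum>\<pi>\<in>?P. F (\<pi> p'))"
    using transposed by (rule sum.cong[OF refl])
  also have "\<dots> = (\<Sum>\<pi>\<in>?P. \<Sum>p'\<in>S. F (\<pi> p'))"
    by (rule sum.swap)
  also have "\<dots> = (\<Sum>\<pi>\<in>?P. \<Sum>i\<in>S. F i)"
    by (rule sum.cong[OF refl]) (simp add: sum.permute[where g = F] o_def)
  finally show ?thesis by simp
qed

lemma sum_permutations_apply_pair:
  assumes "finite S" "p \<in> S" "p' \<in> S" "p' \<noteq> p"
  shows "real (card S) * (real (card S) - 1) * (\<Sum>\<pi>\<in>{\<pi>. \<pi> permutes S}. G (\<pi> p) (\<pi> p'))
       = real (card {\<pi>. \<pi> permutes S}) * (\<Sum>i\<in>S. \<Sum>j\<in>S - {i}. (G i j :: real))"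
proof -
  let ?P = "{\<pi>. \<pi> permutes S}"
  have transposed: "(\<Sum>\<pi>\<in>?P. G (\<pi> p) (\<pi> p')) = (\<Sum>\<pi>\<in>?P. G (\<pi> p) (\<pi> p''))"
    if "p'' \<in> S - {p}" for p''
  proof -
    have "Transposition.transpose p' p'' p = p"
      using assms that by (auto simp: Transposition.transpose_def)
    then show ?thesis
      using sum_permutations_compose_right[OF permutes_swap_id[OF assms(3)], of p'' "\<lambda>\<pi>. G (\<pi> p) (\<pi> p')"] that
      by simp
  qed
  have permuted_complement: "\<pi> ` (S - {p}) = S - {\<pi> p}" if "\<pi> permutes S" for \<pi>
    using permutes_image[OF that] permutes_inj_on[OF that] assms by (auto simp: inj_on_image_set_diff)
  have "real (card (S - {p})) = real (card S) - 1"
  proof -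
    have "card S \<ge> 1" using assms card_gt_0_iff[of S] by auto
    then show ?thesis using assms by (simp add: card_Diff_singleton of_nat_diff)
  qed
  then have "(real (card S) - 1) * (\<Sum>\<pi>\<in>?P. G (\<pi> p) (\<pi> p'))
      = (\<Sum>p''\<in>S - {p}. \<Sum>\<pi>\<in>?P. G (\<pi> p) (\<pi> p'))"
    by simp
  also have "\<dots> = (\<Sum>p''\<in>S - {p}. \<Sum>\<pi>\<in>?P. G (\<pi> p) (\<pi> p''))"
    using transposed by (rule sum.cong[OF refl])
  also have "\<dots> = (\<Sum>\<pi>\<in>?P. \<Sum>p''\<in>S - {p}. G (\<pi> p) (\<pi> p''))"
    by (rule sum.swap)
  also have "\<dots> = (\<Sum>\<pi>\<in>?P. \<Sum>j\<in>S - {\<pi> p}. G (\<pi> p) j)"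
  proof (rule sum.cong[OF refl])
    fix \<pi> assume "\<pi> \<in> ?P"
    then have "\<pi> permutes S" by simp
    then show "(\<Sum>p''\<in>S - {p}. G (\<pi> p) (\<pi> p'')) = (\<Sum>j\<in>S - {\<pi> p}. G (\<pi> p) j)"
      using sum.reindex[OF permutes_inj_on[OF \<open>\<pi> permutes S\<close>], where g = "G (\<pi> p)" and A = "S - {p}"]
      by (simp add: permuted_complement o_def)
  qed
  finally show ?thesis
    using sum_permutations_apply[OF assms(2), of "\<lambda>i. \<Sum>j\<in>S - {i}. G i j"] by (simp add: mult.assoc)
qed

lemma norm_sum_sq_le_card_mult:
  fixes h :: "'b \<Rightarrow> 'a::real_normed_vector"
  shows "(norm (\<Sum>i\<in>S. h i))\<^sup>2 \<le> real (card S) * (\<Sum>i\<in>S. (norm (h i))\<^sup>2)"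
proof -
  have "(norm (\<Sum>i\<in>S. h i))\<^sup>2 \<le> (\<Sum>i\<in>S. norm (h i))\<^sup>2"
    by (intro power_mono norm_sum) auto
  also have "\<dots> \<le> (\<Sum>i\<in>S. (norm (h i))\<^sup>2) * card S"
    by (rule sum_squared_le_sum_of_squares)
  finally show ?thesis by (simp add: mult.commute)
qed

lemma sum_permutations_inner_le:
  fixes h :: "'b \<Rightarrow> 'a::real_inner"
  assumes fin: "finite S" and pp': "p \<in> S" "p' \<in> S" "p \<noteq> p'"
  shows "(\<Sum>\<pi>\<in>{\<pi>. \<pi> permutes S}. h (\<pi> p) \<bullet> h (\<pi> p'))
       \<le> real (card {\<pi>. \<pi> permutes S}) * (norm ((1 / real (card S)) *\<^sub>R (\<Sum>i\<in>S. h i)))\<^sup>2"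
proof -
  define N where "N = real (card S)"
  define cP where "cP = real (card {\<pi>. \<pi> permutes S})"
  define H where "H = (\<Sum>i\<in>S. h i)"
  have N_ge: "N \<ge> 2"
    using card_mono[OF fin, of "{p, p'}"] pp' unfolding N_def by simp
  have "(\<Sum>i\<in>S. \<Sum>j\<in>S - {i}. h i \<bullet> h j) = (\<Sum>i\<in>S. (\<Sum>j\<in>S. h i \<bullet> h j) - h i \<bullet> h i)"
    using fin by (intro sum.cong refl) (simp add: sum_diff1)
  also have "\<dots> = (\<Sum>i\<in>S. \<Sum>j\<in>S. h i \<bullet> h j) - (\<Sum>i\<in>S. (norm (h i))\<^sup>2)"
    by (simp add: sum_subtractf power2_norm_eq_inner)
  also have "(\<Sum>i\<in>S. \<Sum>j\<in>S. h i \<bullet> h j) = (norm H)\<^sup>2"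
    unfolding H_def power2_norm_eq_inner inner_sum_left inner_sum_right by (rule sum.swap)
  finally have "N * (N - 1) * (\<Sum>\<pi>\<in>{\<pi>. \<pi> permutes S}. h (\<pi> p) \<bullet> h (\<pi> p'))
      = cP * ((norm H)\<^sup>2 - (\<Sum>i\<in>S. (norm (h i))\<^sup>2))"
    using sum_permutations_apply_pair[OF fin pp'(1,2), of "\<lambda>i j. h i \<bullet> h j"] pp'(3)
    unfolding N_def cP_def by simp
  also have "\<dots> \<le> cP * ((norm H)\<^sup>2 - (norm H)\<^sup>2 / N)"
  proof -
    have "(norm H)\<^sup>2 / N \<le> (\<Sum>i\<in>S. (norm (h i))\<^sup>2)"
      using norm_sum_sq_le_card_mult[of h S] N_ge unfolding H_def N_def
      by (simp add: divide_le_eq mult.commute)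
    then show ?thesis unfolding cP_def by (intro mult_left_mono) auto
  qed
  also have "\<dots> = N * (N - 1) * (cP * (norm ((1 / N) *\<^sub>R H))\<^sup>2)"
    using N_ge by (simp add: field_simps power2_eq_square)
  finally show ?thesis
    using N_ge unfolding N_def cP_def H_def by (simp add: mult_le_cancel_left_pos)
qed

lemma sum_permutations_weighted_sum_norm_sq_le:
  fixes h :: "'b \<Rightarrow> 'a::real_inner"
  assumes fin: "finite S" and ne: "S \<noteq> {}" and a: "\<And>p. p \<in> S \<Longrightarrow> a p \<ge> 0"
  shows "(\<Sum>\<pi>\<in>{\<pi>. \<pi> permutes S}. (norm (\<Sum>p\<in>S. a p *\<^sub>R h (\<pi> p)))\<^sup>2)
     \<le> real (card {\<pi>. \<pi> permutes S}) * ((\<Sum>p\<in>S. a p)\<^sup>2 * (norm ((1 / real (card S)) *\<^sub>R (\<Sum>i\<in>S. h i)))\<^sup>2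
          + (\<Sum>p\<in>S. (a p)\<^sup>2) * ((1 / real (card S)) * (\<Sum>i\<in>S. (norm (h i))\<^sup>2)))"
proof -
  let ?P = "{\<pi>. \<pi> permutes S}"
  define cP where "cP = real (card ?P)"
  define Q where "Q = (1 / real (card S)) * (\<Sum>i\<in>S. (norm (h i))\<^sup>2)"
  define K where "K = (norm ((1 / real (card S)) *\<^sub>R (\<Sum>i\<in>S. h i)))\<^sup>2"
  define C where "C p p' = (\<Sum>\<pi>\<in>?P. h (\<pi> p) \<bullet> h (\<pi> p'))" for p p'
  have cP_nonneg: "cP \<ge> 0" and K_nonneg: "K \<ge> 0" unfolding cP_def K_def by simp_all
  have C_diag: "C p p = cP * Q" if "p \<in> S" for p
    using sum_permutations_apply[OF that, of "\<lambda>i. (norm (h i))\<^sup>2"] fin ne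
    unfolding cP_def Q_def C_def power2_norm_eq_inner by (simp add: field_simps)
  have expand: "(norm (\<Sum>p\<in>S. a p *\<^sub>R h (\<pi> p)))\<^sup>2
      = (\<Sum>p\<in>S. \<Sum>p'\<in>S. a p * a p' * (h (\<pi> p) \<bullet> h (\<pi> p')))" for \<pi>
    unfolding power2_norm_eq_inner inner_sum_left inner_sum_right
    by (subst sum.swap) (simp add: mult.assoc mult.left_commute)
  have "(\<Sum>\<pi>\<in>?P. (norm (\<Sum>p\<in>S. a p *\<^sub>R h (\<pi> p)))\<^sup>2) = (\<Sum>p\<in>S. \<Sum>p'\<in>S. a p * a p' * C p p')"
    unfolding expand C_def by (simp add: sum_distrib_left sum.swap[of _ ?P])
  also have "\<dots> \<le> (\<Sum>p\<in>S. \<Sum>p'\<in>S. (if p = p' then cP * Q * (a p)\<^sup>2 else 0) + cP * K * (a p * a p'))"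
  proof (intro sum_mono)
    fix p p' assume "p \<in> S" "p' \<in> S"
    then have a_nonneg: "0 \<le> a p * a p'" using a by simp
    show "a p * a p' * C p p' \<le> (if p = p' then cP * Q * (a p)\<^sup>2 else 0) + cP * K * (a p * a p')"
    proof (cases "p = p'")
      case True
      have "0 \<le> cP * K * (a p * a p')" using a_nonneg cP_nonneg K_nonneg by simp
      then show ?thesis using True C_diag \<open>p \<in> S\<close> by (simp add: power2_eq_square)
    next
      case False
      have "a p * a p' * C p p' \<le> a p * a p' * (cP * K)"
        using sum_permutations_inner_le[OF fin \<open>p \<in> S\<close> \<open>p' \<in> S\<close> False] a_nonneg
        unfolding C_def cP_def K_def by (rule mult_left_mono)
      then show ?thesis using False by (simp add: mult.commute)
    qed
  qed
  also have "\<dots> = cP * ((\<Sum>p\<in>S. a p)\<^sup>2 * K + (\<Sum>p\<in>S. (a p)\<^sup>2) * Q)"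
    using fin by (simp add: sum.distrib sum_distrib_left power2_eq_square sum_product algebra_simps)
  finally show ?thesis unfolding cP_def K_def Q_def .
qed

section \<open>Weighted block sums\<close>

definition block_sum :: "nat \<Rightarrow> nat \<Rightarrow> (nat \<Rightarrow> real) \<Rightarrow> (nat \<Rightarrow> nat) \<Rightarrow> (nat \<Rightarrow> 'a) \<Rightarrow> 'a::real_vector"
  where "block_sum b m W \<pi> h = (\<Sum>l<m. W l *\<^sub>R ((1 / real b) *\<^sub>R (\<Sum>j = l*b+1..Suc l*b. h (\<pi> j))))"

lemma block_sum_eq_weighted_sum:
  assumes b: "b \<ge> 1"
  shows "block_sum b m W \<pi> h = (\<Sum>j=1..b*m. (W ((j - 1) div b) / real b) *\<^sub>R h (\<pi> j))"
proof (induction m)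
  case 0
  then show ?case by (simp add: block_sum_def)
next
  case (Suc m)
  have last_block: "(\<Sum>j=b*m+1..b*m+b. (W ((j - 1) div b) / real b) *\<^sub>R h (\<pi> j))
      = W m *\<^sub>R ((1 / real b) *\<^sub>R (\<Sum>j = m*b+1..Suc m*b. h (\<pi> j)))"
  proof -
    have "(j - 1) div b = m" if "j \<in> {b*m+1..b*m+b}" for j
      by (rule div_nat_eqI) (use b that in auto)
    then have "(\<Sum>j=b*m+1..b*m+b. (W ((j - 1) div b) / real b) *\<^sub>R h (\<pi> j))
        = (\<Sum>j=b*m+1..b*m+b. (W m / real b) *\<^sub>R h (\<pi> j))"
      by (intro sum.cong) auto
    then show ?thesis by (simp add: scaleR_sum_right algebra_simps)
  qed
  have "(\<Sum>j=1..b*Suc m. (W ((j - 1) div b) / real b) *\<^sub>R h (\<pi> j))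
     = (\<Sum>j=1..b*m. (W ((j - 1) div b) / real b) *\<^sub>R h (\<pi> j))
       + (\<Sum>j=b*m+1..b*m+b. (W ((j - 1) div b) / real b) *\<^sub>R h (\<pi> j))"
    using sum.ub_add_nat[of 1 "b*m" "\<lambda>j. (W ((j - 1) div b) / real b) *\<^sub>R h (\<pi> j)" b]
    by (simp add: algebra_simps)
  then show ?case
    using Suc last_block by (simp add: block_sum_def)
qed

lemma block_weight_bounds:
  assumes b: "b \<ge> 1" and W: "\<And>l. l < m \<Longrightarrow> 0 \<le> W l \<and> W l \<le> 1" and j: "j \<in> {1..b*m}"
  shows "0 \<le> W ((j - 1) div b) / real b \<and> W ((j - 1) div b) / real b \<le> 1 / real b"
proof -
  have "j - 1 < m * b" using j by (auto simp: mult.commute)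
  then have "(j - 1) div b < m" by (rule less_mult_imp_div_less)
  then show ?thesis using W b by (auto simp: divide_right_mono)
qed

lemma block_sum_norm_sq_le:
  fixes h :: "nat \<Rightarrow> 'a::real_inner"
  assumes n: "n = b * m" and b: "b \<ge> 1" and \<pi>: "\<pi> permutes {1..n}"
    and W: "\<And>l. l < m \<Longrightarrow> 0 \<le> W l \<and> W l \<le> 1"
  shows "(norm (block_sum b m W \<pi> h))\<^sup>2 \<le> (real m)\<^sup>2 * ((1 / real n) * (\<Sum>i=1..n. (norm (h i))\<^sup>2))"
proof -
  let ?a = "\<lambda>j. W ((j - 1) div b) / real b"
  have "norm (block_sum b m W \<pi> h) \<le> (\<Sum>j=1..n. norm (?a j *\<^sub>R h (\<pi> j)))"
    unfolding block_sum_eq_weighted_sum[OF b] n by (rule norm_sum)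
  also have "\<dots> \<le> (\<Sum>j=1..n. (1 / real b) * norm (h (\<pi> j)))"
  proof (rule sum_mono)
    fix j assume "j \<in> {1..n}"
    then have "0 \<le> ?a j" "?a j \<le> 1 / real b"
      using block_weight_bounds[of b m W, OF b W] n by auto
    then have "norm (?a j *\<^sub>R h (\<pi> j)) = ?a j * norm (h (\<pi> j))"
      by (simp only: norm_scaleR abs_of_nonneg)
    also have "\<dots> \<le> (1 / real b) * norm (h (\<pi> j))"
      using \<open>?a j \<le> 1 / real b\<close> by (rule mult_right_mono) simp
    finally show "norm (?a j *\<^sub>R h (\<pi> j)) \<le> (1 / real b) * norm (h (\<pi> j))" .
  qed
  also have "\<dots> = (1 / real b) * (\<Sum>i=1..n. norm (h i))"
    using sum.permute[OF \<pi>, of "\<lambda>i. norm (h i)"] by (simp add: sum_distrib_left o_def)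
  finally have "(norm (block_sum b m W \<pi> h))\<^sup>2 \<le> ((1 / real b) * (\<Sum>i=1..n. norm (h i)))\<^sup>2"
    by (intro power_mono) auto
  also have "\<dots> = (1 / real b)\<^sup>2 * (\<Sum>i=1..n. norm (h i))\<^sup>2"
    by (rule power_mult_distrib)
  also have "\<dots> \<le> (1 / real b)\<^sup>2 * ((\<Sum>i=1..n. (norm (h i))\<^sup>2) * real n)"
    using sum_squared_le_sum_of_squares[of "\<lambda>i. norm (h i)" "{1..n}"] by (intro mult_left_mono) auto
  also have "\<dots> = (real m)\<^sup>2 * ((1 / real n) * (\<Sum>i=1..n. (norm (h i))\<^sup>2))"
    using b n by (cases "m = 0") (simp_all add: field_simps power2_eq_square)
  finally show ?thesis .
qed

lemma sum_permutations_block_sum_norm_sq_le: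
  fixes h :: "nat \<Rightarrow> 'a::real_inner"
  assumes n: "n = b * m" and b: "b \<ge> 1" and m: "m \<ge> 1"
    and W: "\<And>l. l < m \<Longrightarrow> 0 \<le> W l \<and> W l \<le> 1"
  shows "(\<Sum>\<pi>\<in>{\<pi>. \<pi> permutes {1..n}}. (norm (block_sum b m W \<pi> h))\<^sup>2)
       \<le> real (card {\<pi>. \<pi> permutes {1..n}})
         * ((real m)\<^sup>2 * (norm ((1 / real n) *\<^sub>R (\<Sum>i=1..n. h i)))\<^sup>2
            + (real m / real b) * ((1 / real n) * (\<Sum>i=1..n. (norm (h i))\<^sup>2)))"
proof -
  let ?a = "\<lambda>j. W ((j - 1) div b) / real b"
  have a: "0 \<le> ?a j \<and> ?a j \<le> 1 / real b" if "j \<in> {1..n}" for j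
    using block_weight_bounds[of b m W, OF b W] that n by blast
  have "(\<Sum>j=1..n. ?a j) \<le> (\<Sum>j=1..n. 1 / real b)"
    using a by (intro sum_mono) auto
  then have sum_a: "(\<Sum>j=1..n. ?a j)\<^sup>2 \<le> (real m)\<^sup>2"
    using a b n by (intro power_mono) (auto intro: sum_nonneg)
  have "(\<Sum>j=1..n. (?a j)\<^sup>2) \<le> (\<Sum>j=1..n. (1 / real b)\<^sup>2)"
    using a by (intro sum_mono power_mono) auto
  then have sum_a_sq: "(\<Sum>j=1..n. (?a j)\<^sup>2) \<le> real m / real b"
    using b n by (simp add: power2_eq_square)
  have "(\<Sum>\<pi>\<in>{\<pi>. \<pi> permutes {1..n}}. (norm (block_sum b m W \<pi> h))\<^sup>2)
      = (\<Sum>\<pi>\<in>{\<pi>. \<pi> permutes {1..n}}. (norm (\<Sum>j=1..n. ?a j *\<^sub>R h (\<pi> j)))\<^sup>2)"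
    unfolding block_sum_eq_weighted_sum[OF b] n ..
  also have "\<dots> \<le> real (card {\<pi>. \<pi> permutes {1..n}})
         * ((\<Sum>j=1..n. ?a j)\<^sup>2 * (norm ((1 / real n) *\<^sub>R (\<Sum>i=1..n. h i)))\<^sup>2
            + (\<Sum>j=1..n. (?a j)\<^sup>2) * ((1 / real n) * (\<Sum>i=1..n. (norm (h i))\<^sup>2)))"
    using sum_permutations_weighted_sum_norm_sq_le[of "{1..n}" ?a h] a b m n by auto
  also have "\<dots> \<le> real (card {\<pi>. \<pi> permutes {1..n}})
         * ((real m)\<^sup>2 * (norm ((1 / real n) *\<^sub>R (\<Sum>i=1..n. h i)))\<^sup>2
            + (real m / real b) * ((1 / real n) * (\<Sum>i=1..n. (norm (h i))\<^sup>2)))"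
  proof -
    have "0 \<le> (1 / real n) * (\<Sum>i=1..n. (norm (h i))\<^sup>2)"
      by (simp add: sum_nonneg)
    then show ?thesis
      using sum_a sum_a_sq by (intro mult_left_mono add_mono mult_right_mono) auto
  qed
  finally show ?thesis .
qed

lemma norm_scaleR_diff_sq_le:
  fixes e w :: "'a::real_normed_vector"
  assumes "0 \<le> q" "q < 1"
  shows "(norm (q *\<^sub>R e - w))\<^sup>2 \<le> q * (norm e)\<^sup>2 + (norm w)\<^sup>2 / (1 - q)"
proof -
  have "norm (q *\<^sub>R e - w) \<le> q * norm e + norm w"
    using norm_triangle_ineq4[of "q *\<^sub>R e" w] assms by simp
  then have "(norm (q *\<^sub>R e - w))\<^sup>2 \<le> (q * norm e + norm w)\<^sup>2"
    by (intro power_mono) auto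
  also have "\<dots> \<le> q * (norm e)\<^sup>2 + (norm w)\<^sup>2 / (1 - q)"
  proof -
    have "q * (norm e)\<^sup>2 + (norm w)\<^sup>2 / (1 - q) - (q * norm e + norm w)\<^sup>2
        = q * ((1 - q) * norm e - norm w)\<^sup>2 / (1 - q)"
      using assms by (simp add: field_simps power2_eq_square)
    moreover have "q * ((1 - q) * norm e - norm w)\<^sup>2 / (1 - q) \<ge> 0"
      using assms by simp
    ultimately show ?thesis by linarith
  qed
  finally show ?thesis .
qed

lemma sq_sum3_le:
  fixes x y w :: real
  shows "(x + y + w)\<^sup>2 \<le> 2 * x\<^sup>2 + 6 * y\<^sup>2 + 3 * w\<^sup>2"
proof -
  have "2 * x\<^sup>2 + 6 * y\<^sup>2 + 3 * w\<^sup>2 - (x + y + w)\<^sup>2 = (x - y - w)\<^sup>2 + (2 * y - w)\<^sup>2"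
    by (simp add: power2_eq_square algebra_simps)
  then show ?thesis by (smt (verit) zero_le_power2)
qed

lemma two_plus_scaled_sum_le:
  fixes X K :: real and Y :: "nat \<Rightarrow> real"
  assumes "m \<ge> 1" "X \<le> K" "\<And>i. i < m \<Longrightarrow> Y i \<le> K"
  shows "2 * X + 2 / (3 * real m) * (\<Sum>i<m. Y i) \<le> 8 / 3 * K"
proof -
  have "(\<Sum>i<m. Y i) \<le> real m * K"
    using sum_mono[of "{..<m}" Y "\<lambda>_. K"] assms(3) by simp
  then have "2 / (3 * real m) * (\<Sum>i<m. Y i) \<le> 2 / 3 * K"
    using assms(1) by (simp add: field_simps)
  then show ?thesis using assms(2) by linarith
qed

text \<open>The scalar part of one epoch: E is the initial gap, T the total deviation of the
  extrapolation points from the proxy iterate, Sn the norm of the momentum sum; the condition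
  on \<kappa> makes the recursion for T contractive.\<close>
lemma momentum_sum_le:
  fixes E Mn Sn T SX L \<kappa> q r :: real
  assumes nonneg: "0 \<le> T" "0 \<le> SX" "0 \<le> \<kappa>" "0 \<le> L" and q: "0 \<le> q" and r: "r \<ge> 1"
    and step: "\<kappa> * L * r \<le> (1 - q) / 4"
    and T_le: "T \<le> r * E + \<kappa> * SX + r * \<kappa> * L * T"
    and Sn_le: "Sn \<le> Mn + L * T"
  shows "Sn \<le> Mn + (1 - q) / (3 * r) * SX + 4 / 3 * L * r * E"
proof -
  have "r * \<kappa> * L \<le> 1 / 4"
    using step q by (simp add: mult.commute mult.left_commute)
  then have "r * \<kappa> * L * T \<le> 1 / 4 * T"
    using nonneg by (intro mult_right_mono) auto
  then have "L * T \<le> L * (4 / 3 * (r * E + \<kappa> * SX))"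
    using T_le nonneg by (intro mult_left_mono) auto
  also have "\<dots> \<le> (1 - q) / (3 * r) * SX + 4 / 3 * L * r * E"
  proof -
    have "4 / 3 * (\<kappa> * L * r) * SX \<le> 4 / 3 * ((1 - q) / 4) * SX"
      using mult_right_mono[OF mult_left_mono[OF step, of "4 / 3"], of SX] nonneg by simp
    then show ?thesis using r by (simp add: field_simps)
  qed
  finally show ?thesis
    using Sn_le by linarith
qed

lemma epoch_gap_real_bound:
  fixes E Mn Sn T SX SX2 L \<kappa> be q r :: real
  assumes nonneg: "0 \<le> E" "0 \<le> Mn" "0 \<le> Sn" "0 \<le> T" "0 \<le> SX" "0 \<le> \<kappa>" "0 \<le> L"
    and be: "0 \<le> be" "be \<le> 1" and q: "0 \<le> q" "q < 1" and r: "r \<ge> 1"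
    and step: "\<kappa> * L * r \<le> (1 - q) / 4"
    and T_le: "T \<le> r * E + \<kappa> * SX + r * \<kappa> * L * T"
    and Sn_le: "Sn \<le> Mn + L * T"
    and SX_sq: "SX\<^sup>2 \<le> r * SX2"
  shows "q * E\<^sup>2 + (be * \<kappa> * Sn)\<^sup>2 / (1 - q)
     \<le> (1 + 2 * q) / 3 * E\<^sup>2 + (be * \<kappa>)\<^sup>2 / (1 - q) * (2 * Mn\<^sup>2 + 2 / (3 * r) * SX2)"
proof -
  define B where "B = (1 - q) / (3 * r) * SX"
  define R where "R = 4 / 3 * L * r * E"
  have "Sn\<^sup>2 \<le> (Mn + B + R)\<^sup>2"
    using momentum_sum_le[OF nonneg(4-7) q(1) r step T_le Sn_le] nonneg
    unfolding B_def R_def by (intro power_mono) auto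
  also have "\<dots> \<le> 2 * Mn\<^sup>2 + 6 * B\<^sup>2 + 3 * R\<^sup>2"
    by (rule sq_sum3_le)
  also have "6 * B\<^sup>2 \<le> 2 / (3 * r) * SX2"
  proof -
    have "6 * B\<^sup>2 = 2 / 3 * (1 - q)\<^sup>2 / r\<^sup>2 * SX\<^sup>2"
      unfolding B_def using r by (simp add: power2_eq_square field_simps)
    also have "\<dots> \<le> 2 / 3 * 1 / r\<^sup>2 * (r * SX2)"
      using q SX_sq by (intro mult_mono divide_right_mono power_le_one) auto
    also have "\<dots> = 2 / (3 * r) * SX2"
      using r by (simp add: power2_eq_square field_simps)
    finally show ?thesis .
  qed
  finally have Sn_sq: "(be * \<kappa> * Sn)\<^sup>2 \<le> (be * \<kappa>)\<^sup>2 * (2 * Mn\<^sup>2 + 2 / (3 * r) * SX2) + (be * \<kappa>)\<^sup>2 * (3 * R\<^sup>2)"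
    by (simp add: power_mult_distrib mult_left_mono distrib_left[symmetric])
  have "(be * \<kappa>)\<^sup>2 * (3 * R\<^sup>2) = 16 / 3 * (be * (\<kappa> * L * r))\<^sup>2 * E\<^sup>2"
    unfolding R_def by (simp add: power2_eq_square)
  also have "\<dots> \<le> 16 / 3 * (1 * ((1 - q) / 4))\<^sup>2 * E\<^sup>2"
    using be step nonneg r by (intro mult_right_mono mult_left_mono power_mono mult_mono) auto
  also have "\<dots> = (1 - q) * ((1 - q) / 3 * E\<^sup>2)"
    by (simp add: power2_eq_square)
  finally have "(be * \<kappa> * Sn)\<^sup>2 \<le> (1 - q) * ((be * \<kappa>)\<^sup>2 / (1 - q) * (2 * Mn\<^sup>2 + 2 / (3 * r) * SX2)
      + (1 - q) / 3 * E\<^sup>2)"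
    using Sn_sq q by (simp add: distrib_left)
  then have "(be * \<kappa> * Sn)\<^sup>2 / (1 - q)
      \<le> (be * \<kappa>)\<^sup>2 / (1 - q) * (2 * Mn\<^sup>2 + 2 / (3 * r) * SX2) + (1 - q) / 3 * E\<^sup>2"
    using q by (simp add: divide_le_eq mult.commute)
  then show ?thesis by (simp add: field_simps)
qed

section \<open>One epoch of RRM\<close>

text \<open>rrm_weight be lam i l is the coefficient of the l-th mini-batch gradient in the
  displacement of the i-th extrapolation point from the proxy iterate; see y_hat_minus_z.\<close>
definition rrm_weight :: "real \<Rightarrow> real \<Rightarrow> nat \<Rightarrow> nat \<Rightarrow> real" where
  "rrm_weight be lam i l = (if l < i then 1 + (lam - be / (1 - be)) * (1 - be) * be ^ (i - 1 - l) else 0)"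

lemma rrm_weight_bounds:
  assumes "0 \<le> be" "be < 1" "0 \<le> lam" "lam \<le> be / (1 - be)"
  shows "0 \<le> rrm_weight be lam i l \<and> rrm_weight be lam i l \<le> 1"
proof -
  let ?a = "(lam - be / (1 - be)) * (1 - be)" and ?p = "be ^ (i - 1 - l)"
  have "?a = lam * (1 - be) - be"
    using assms by (simp add: field_simps)
  moreover have "0 \<le> lam * (1 - be)" "lam * (1 - be) \<le> be"
    using assms by (simp_all add: le_divide_eq)
  ultimately have a: "- be \<le> ?a" "?a \<le> 0"
    by linarith+
  have p: "0 \<le> ?p" "be * ?p \<le> 1"
    using assms power_le_one[of be "Suc (i - 1 - l)"] by auto
  have "- be * ?p \<le> ?a * ?p" "?a * ?p \<le> 0"
    using mult_right_mono[OF a(1) p(1)] mult_nonpos_nonneg[OF a(2) p(1)] by auto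
  then show ?thesis
    using p(2) unfolding rrm_weight_def by auto
qed

locale rrm_one_epoch =
  fixes al be lam L :: real and b m n :: nat and g :: "nat \<Rightarrow> 'a \<Rightarrow> 'a::real_normed_vector"
    and p :: "nat \<Rightarrow> nat" and s :: "'a \<times> 'a"
  assumes b_pos: "b \<ge> 1" and m_pos: "m \<ge> 1" and n_eq: "n = b * m"
    and perm: "p permutes {1..n}"
    and lip: "\<And>i x y. i \<in> {1..n} \<Longrightarrow> norm (g i x - g i y) \<le> L * norm (x - y)"
    and L_pos: "L > 0" and be_nonneg: "0 \<le> be" and be_less_1: "be < 1"
    and lam_nonneg: "0 \<le> lam" and lam_le: "lam \<le> be / (1 - be)"
    and al_pos: "0 < al" and al_le: "al \<le> (1 - be) * (1 - be ^ m) / (4 * L * real m)"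
begin

text \<open>y i and y_prev i are the iterates y_{i+1} and y_i of the paper.\<close>
definition "y i = snd (rrm_loop al be lam b g p i s)"
definition "y_prev i = fst (rrm_loop al be lam b g p i s)"
definition "v i = y i - y_prev i"
definition "y_hat i = y i + lam *\<^sub>R v i"
definition "d i = (1 / real b) *\<^sub>R (\<Sum>j = i*b+1..Suc i*b. g (p j) (y_hat i))"
definition "c = be / (1 - be)"
definition "\<kappa> = al / (1 - be)"
definition "z = y 0 + c *\<^sub>R v 0"
definition "D i = (1 / real b) *\<^sub>R (\<Sum>j = i*b+1..Suc i*b. g (p j) z)"
definition "dev i = norm (y_hat i - z)"
definition "S = (\<Sum>l<m. be ^ (m - 1 - l) *\<^sub>R d l)"
definition "M = block_sum b m (\<lambda>l. be ^ (m - 1 - l)) p (\<lambda>j. g j z)"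
definition "X i = norm (block_sum b m (rrm_weight be lam i) p (\<lambda>j. g j z))"

lemma y_prev_Suc: "y_prev (Suc i) = y i"
  and y_Suc: "y (Suc i) = y i - al *\<^sub>R d i + be *\<^sub>R v i"
  unfolding y_def y_prev_def d_def y_hat_def v_def by (simp_all add: rrm_step_def Let_def)

lemma v_Suc: "v (Suc i) = be *\<^sub>R v i - al *\<^sub>R d i"
  using y_prev_Suc y_Suc unfolding v_def[of "Suc i"] by (simp add: algebra_simps)

lemma v_eq: "v i = be ^ i *\<^sub>R v 0 - al *\<^sub>R (\<Sum>l<i. be ^ (i - 1 - l) *\<^sub>R d l)"
proof (induction i)
  case 0
  then show ?case by simp
next
  case (Suc i)
  have "(\<Sum>l<i. be ^ (Suc i - 1 - l) *\<^sub>R d l) = be *\<^sub>R (\<Sum>l<i. be ^ (i - 1 - l) *\<^sub>R d l)"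
    unfolding scaleR_sum_right by (intro sum.cong refl) (simp add: Suc_diff_Suc flip: power_Suc)
  then have sum_Suc: "(\<Sum>l<Suc i. be ^ (Suc i - 1 - l) *\<^sub>R d l) = be *\<^sub>R (\<Sum>l<i. be ^ (i - 1 - l) *\<^sub>R d l) + d i"
    by simp
  have "v (Suc i) = be *\<^sub>R (be ^ i *\<^sub>R v 0 - al *\<^sub>R (\<Sum>l<i. be ^ (i - 1 - l) *\<^sub>R d l)) - al *\<^sub>R d i"
    using Suc by (simp add: v_Suc)
  then show ?case
    unfolding sum_Suc by (simp add: algebra_simps)
qed

lemma c_eq: "1 + c = 1 / (1 - be)"
  using be_less_1 unfolding c_def by (simp add: field_simps)

lemma proxy_eq: "y i + c *\<^sub>R v i = z - \<kappa> *\<^sub>R (\<Sum>l<i. d l)"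
proof (induction i)
  case 0
  then show ?case by (simp add: z_def)
next
  case (Suc i)
  have "(1 + c) * be = c" "(1 + c) * al = \<kappa>"
    using be_less_1 unfolding c_def \<kappa>_def by (simp_all add: field_simps)
  moreover have "y (Suc i) + c *\<^sub>R v (Suc i) = y i + ((1 + c) * be) *\<^sub>R v i - ((1 + c) * al) *\<^sub>R d i"
    by (simp add: y_Suc v_Suc algebra_simps)
  ultimately have "y (Suc i) + c *\<^sub>R v (Suc i) = y i + c *\<^sub>R v i - \<kappa> *\<^sub>R d i"
    by simp
  then show ?case
    using Suc by (simp add: algebra_simps)
qed

lemma y_hat_minus_z:
  "y_hat i - z = ((lam - c) * be ^ i) *\<^sub>R v 0 - \<kappa> *\<^sub>R (\<Sum>l<i. rrm_weight be lam i l *\<^sub>R d l)"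
proof -
  have \<kappa>_factor: "\<kappa> * ((lam - c) * (1 - be) * x) = (lam - c) * (al * x)" for x
    using be_less_1 unfolding \<kappa>_def by (simp add: field_simps)
  have "(\<Sum>l<i. rrm_weight be lam i l *\<^sub>R d l)
      = (\<Sum>l<i. d l) + (\<Sum>l<i. ((lam - c) * (1 - be) * be ^ (i - 1 - l)) *\<^sub>R d l)"
    unfolding rrm_weight_def c_def by (simp add: scaleR_add_left sum.distrib)
  then have weighted_sum: "\<kappa> *\<^sub>R (\<Sum>l<i. d l) + (lam - c) *\<^sub>R (al *\<^sub>R (\<Sum>l<i. be ^ (i - 1 - l) *\<^sub>R d l))
      = \<kappa> *\<^sub>R (\<Sum>l<i. rrm_weight be lam i l *\<^sub>R d l)"
    by (simp add: scaleR_add_right scaleR_sum_right \<kappa>_factor)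
  have "y_hat i - z = (lam - c) *\<^sub>R v i - \<kappa> *\<^sub>R (\<Sum>l<i. d l)"
    using proxy_eq[of i] unfolding y_hat_def by (simp add: algebra_simps)
  also have "\<dots> = ((lam - c) * be ^ i) *\<^sub>R v 0
      - (\<kappa> *\<^sub>R (\<Sum>l<i. d l) + (lam - c) *\<^sub>R (al *\<^sub>R (\<Sum>l<i. be ^ (i - 1 - l) *\<^sub>R d l)))"
    unfolding v_eq[of i] by (simp add: algebra_simps)
  finally show ?thesis
    unfolding weighted_sum .
qed

lemma c_nonneg: "0 \<le> c" and \<kappa>_nonneg: "0 \<le> \<kappa>"
  using be_nonneg be_less_1 al_pos unfolding c_def \<kappa>_def by simp_all

lemma \<kappa>_step: "\<kappa> * L * real m \<le> (1 - be ^ m) / 4"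
proof -
  have "\<kappa> * L * real m = al * (L * real m) / (1 - be)"
    unfolding \<kappa>_def by simp
  also have "\<dots> \<le> (1 - be) * (1 - be ^ m) / (4 * L * real m) * (L * real m) / (1 - be)"
    using al_le L_pos be_less_1 by (intro divide_right_mono mult_right_mono) auto
  also have "\<dots> = (1 - be ^ m) / 4"
    using L_pos be_less_1 m_pos by (simp add: field_simps)
  finally show ?thesis .
qed

lemma norm_d_minus_D_le:
  assumes "l < m"
  shows "norm (d l - D l) \<le> L * dev l"
proof -
  have index: "p j \<in> {1..n}" if "j \<in> {l*b+1..Suc l*b}" for j
  proof -
    have "Suc l * b \<le> m * b" using assms by (intro mult_right_mono) auto
    then show ?thesis using that n_eq permutes_in_image[OF perm] by (auto simp: mult.commute)
  qed
  have "norm (d l - D l) = (1 / real b) * norm (\<Sum>j = l*b+1..Suc l*b. g (p j) (y_hat l) - g (p j) z)"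
    unfolding d_def D_def by (simp add: sum_subtractf flip: scaleR_diff_right)
  also have "\<dots> \<le> (1 / real b) * (\<Sum>j = l*b+1..Suc l*b. L * dev l)"
    unfolding dev_def using index lip
    by (intro mult_left_mono order_trans[OF norm_sum sum_mono]) auto
  also have "\<dots> = L * dev l"
    using b_pos by simp
  finally show ?thesis .
qed

lemma norm_weighted_sum_d_le:
  assumes "A \<subseteq> {..<m}" and w: "\<And>l. l \<in> A \<Longrightarrow> 0 \<le> w l \<and> w l \<le> 1"
  shows "norm (\<Sum>l\<in>A. w l *\<^sub>R d l) \<le> norm (\<Sum>l\<in>A. w l *\<^sub>R D l) + L * (\<Sum>l\<in>A. dev l)"
proof -
  have "norm (\<Sum>l\<in>A. w l *\<^sub>R (d l - D l)) \<le> (\<Sum>l\<in>A. norm (w l *\<^sub>R (d l - D l)))"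
    by (rule norm_sum)
  also have "\<dots> \<le> (\<Sum>l\<in>A. L * dev l)"
  proof (rule sum_mono)
    fix l assume "l \<in> A"
    then have "w l * norm (d l - D l) \<le> 1 * (L * dev l)"
      using w norm_d_minus_D_le assms(1) L_pos
      by (intro mult_mono[OF _ _ _ norm_ge_zero]) (auto simp: dev_def)
    then show "norm (w l *\<^sub>R (d l - D l)) \<le> L * dev l"
      using w \<open>l \<in> A\<close> by simp
  qed
  finally show ?thesis
    using norm_triangle_ineq[of "\<Sum>l\<in>A. w l *\<^sub>R D l" "\<Sum>l\<in>A. w l *\<^sub>R (d l - D l)"]
    by (simp add: sum_distrib_left scaleR_diff_right sum_subtractf)
qed

lemma block_sum_at_z: "block_sum b m W p (\<lambda>j. g j z) = (\<Sum>l<m. W l *\<^sub>R D l)"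
  unfolding block_sum_def D_def ..

lemma dev_le:
  assumes "i < m"
  shows "dev i \<le> norm (z - y 0) + \<kappa> * X i + \<kappa> * L * (\<Sum>l<i. dev l)"
proof -
  have weights: "0 \<le> rrm_weight be lam i l \<and> rrm_weight be lam i l \<le> 1" for l
    by (rule rrm_weight_bounds[OF be_nonneg be_less_1 lam_nonneg lam_le])
  have "norm (((lam - c) * be ^ i) *\<^sub>R v 0) \<le> c * norm (v 0)"
  proof -
    have "\<bar>(lam - c) * be ^ i\<bar> = (c - lam) * be ^ i"
      using lam_le be_nonneg unfolding c_def by (simp add: abs_mult)
    also have "\<dots> \<le> c * 1"
      using lam_nonneg lam_le be_nonneg be_less_1 c_nonneg unfolding c_def
      by (intro mult_mono power_le_one) auto
    finally show ?thesis by (simp add: mult_right_mono)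
  qed
  also have "c * norm (v 0) = norm (z - y 0)"
    unfolding z_def using c_nonneg by simp
  finally have first: "norm (((lam - c) * be ^ i) *\<^sub>R v 0) \<le> norm (z - y 0)" .
  have "X i = norm (\<Sum>l<i. rrm_weight be lam i l *\<^sub>R D l)"
    unfolding X_def block_sum_at_z using assms
    by (intro arg_cong[where f = norm] sum.mono_neutral_right) (auto simp: rrm_weight_def)
  then have "norm (\<Sum>l<i. rrm_weight be lam i l *\<^sub>R d l) \<le> X i + L * (\<Sum>l<i. dev l)"
    using norm_weighted_sum_d_le[of "{..<i}"] weights assms by auto
  then have "norm (\<kappa> *\<^sub>R (\<Sum>l<i. rrm_weight be lam i l *\<^sub>R d l)) \<le> \<kappa> * (X i + L * (\<Sum>l<i. dev l))"
    using \<kappa>_nonneg by (simp add: mult_left_mono)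
  then show ?thesis
    using first norm_triangle_ineq4[of "((lam - c) * be ^ i) *\<^sub>R v 0" "\<kappa> *\<^sub>R (\<Sum>l<i. rrm_weight be lam i l *\<^sub>R d l)"]
    unfolding dev_def y_hat_minus_z by (simp add: algebra_simps)
qed

lemma sum_dev_le:
  "(\<Sum>i<m. dev i) \<le> real m * norm (z - y 0) + \<kappa> * (\<Sum>i<m. X i) + real m * \<kappa> * L * (\<Sum>i<m. dev i)"
proof -
  have "(\<Sum>i<m. dev i) \<le> (\<Sum>i<m. norm (z - y 0) + \<kappa> * X i + \<kappa> * L * (\<Sum>l<m. dev l))"
  proof (rule sum_mono)
    fix i assume i: "i \<in> {..<m}"
    have "(\<Sum>l<i. dev l) \<le> (\<Sum>l<m. dev l)"
      using i by (intro sum_mono2) (auto simp: dev_def)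
    then have "\<kappa> * L * (\<Sum>l<i. dev l) \<le> \<kappa> * L * (\<Sum>l<m. dev l)"
      using \<kappa>_nonneg L_pos by (intro mult_left_mono) auto
    then show "dev i \<le> norm (z - y 0) + \<kappa> * X i + \<kappa> * L * (\<Sum>l<m. dev l)"
      using dev_le[of i] i by simp
  qed
  then show ?thesis
    by (simp add: sum.distrib sum_distrib_left mult.assoc)
qed

lemma norm_S_le: "norm S \<le> norm M + L * (\<Sum>i<m. dev i)"
  unfolding S_def M_def block_sum_at_z
  using be_nonneg be_less_1 by (intro norm_weighted_sum_d_le) (auto intro: power_le_one)

lemma rrm_z_eq: "rrm_z be t = snd t + c *\<^sub>R (snd t - fst t)"
proof -
  have "(1 / (1 - be)) *\<^sub>R snd t = snd t + c *\<^sub>R snd t"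
    unfolding c_eq[symmetric] by (simp add: scaleR_add_left)
  then show ?thesis
    unfolding rrm_z_def c_def by (simp add: algebra_simps)
qed

lemma z_eq: "z = rrm_z be s"
  and gap_eq: "rrm_z be s - snd s = z - y 0"
  unfolding rrm_z_eq z_def v_def y_def y_prev_def by simp_all

lemma epoch_gap_eq:
  "rrm_z be (rrm_epoch al be lam b m g p s) - snd (rrm_epoch al be lam b m g p s)
     = be ^ m *\<^sub>R (z - y 0) - (be * \<kappa>) *\<^sub>R S"
proof -
  have "rrm_epoch al be lam b m g p s = (y_prev m, y m)"
    unfolding rrm_epoch_def y_def y_prev_def by simp
  then have "rrm_z be (rrm_epoch al be lam b m g p s) - snd (rrm_epoch al be lam b m g p s) = c *\<^sub>R v m"
    unfolding rrm_z_eq v_def by simp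
  also have "\<dots> = be ^ m *\<^sub>R (z - y 0) - (be * \<kappa>) *\<^sub>R S"
    using be_less_1 unfolding v_eq[of m] S_def z_def c_def \<kappa>_def by (simp add: algebra_simps)
  finally show ?thesis .
qed

lemma epoch_gap_sq_le:
  "(norm (rrm_z be (rrm_epoch al be lam b m g p s) - snd (rrm_epoch al be lam b m g p s)))\<^sup>2
   \<le> (1 + 2 * be ^ m) / 3 * (norm (rrm_z be s - snd s))\<^sup>2
     + (be * \<kappa>)\<^sup>2 / (1 - be ^ m) * (2 * (norm M)\<^sup>2 + 2 / (3 * real m) * (\<Sum>i<m. (X i)\<^sup>2))"
proof -
  have q: "0 \<le> be ^ m" "be ^ m < 1"
    using be_nonneg be_less_1 m_pos by (simp_all add: power_less_one_iff)
  have "(norm (rrm_z be (rrm_epoch al be lam b m g p s) - snd (rrm_epoch al be lam b m g p s)))\<^sup>2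
      \<le> be ^ m * (norm (z - y 0))\<^sup>2 + (be * \<kappa> * norm S)\<^sup>2 / (1 - be ^ m)"
  proof -
    have "norm ((be * \<kappa>) *\<^sub>R S) = be * \<kappa> * norm S"
      using be_nonneg \<kappa>_nonneg by simp
    then show ?thesis
      using norm_scaleR_diff_sq_le[OF q, of "z - y 0" "(be * \<kappa>) *\<^sub>R S"] unfolding epoch_gap_eq
      by (simp only:)
  qed
  also have "\<dots> \<le> (1 + 2 * be ^ m) / 3 * (norm (z - y 0))\<^sup>2
     + (be * \<kappa>)\<^sup>2 / (1 - be ^ m) * (2 * (norm M)\<^sup>2 + 2 / (3 * real m) * (\<Sum>i<m. (X i)\<^sup>2))"
  proof (rule epoch_gap_real_bound[OF _ _ _ _ _ \<kappa>_nonneg _ be_nonneg _ q _ \<kappa>_step sum_dev_le norm_S_le])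
    show "(\<Sum>i<m. X i)\<^sup>2 \<le> real m * (\<Sum>i<m. (X i)\<^sup>2)"
      using sum_squared_le_sum_of_squares[of X "{..<m}"] by (simp add: mult.commute)
  qed (use L_pos be_less_1 m_pos in \<open>auto simp: dev_def X_def intro: sum_nonneg\<close>)
  finally show ?thesis unfolding gap_eq .
qed

end

lemma rrm_seq_Suc:
  assumes "k \<ge> 1"
  shows "rrm_seq al be lam b m g perm x1 (Suc k)
       = rrm_epoch (al k) be lam b m g (perm k) (rrm_seq al be lam b m g perm x1 k)"
  using assms by (cases k) auto

lemma rrm_seq_fun_upd:
  "k' \<le> k \<Longrightarrow> rrm_seq al be lam b m g (perm(k := p)) x1 k' = rrm_seq al be lam b m g perm x1 k'"
  by (induction al be lam b m g perm x1 k' rule: rrm_seq.induct) auto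

locale rrm_problem =
  fixes f :: "nat \<Rightarrow> 'a::real_inner \<Rightarrow> real" and g :: "nat \<Rightarrow> 'a \<Rightarrow> 'a"
    and n b m :: nat and L fbar be lam :: real
  assumes b_pos: "b \<ge> 1" and m_pos: "m \<ge> 1" and n_eq: "n = b * m"
    and grad: "\<And>i x. i \<in> {1..n} \<Longrightarrow> (f i has_derivative (\<lambda>h. g i x \<bullet> h)) (at x)"
    and L_pos: "L > 0"
    and lip: "\<And>i x y. i \<in> {1..n} \<Longrightarrow> norm (g i x - g i y) \<le> L * norm (x - y)"
    and lower: "\<And>i x. i \<in> {1..n} \<Longrightarrow> fbar \<le> f i x"
    and be_nonneg: "0 \<le> be" and be_less_1: "be < 1"
    and lam_nonneg: "0 \<le> lam" and lam_le: "lam \<le> be / (1 - be)"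
begin

definition "f_avg x = (1 / real n) * (\<Sum>i=1..n. f i x)"
definition "grad_avg x = (1 / real n) *\<^sub>R (\<Sum>i=1..n. g i x)"
definition "grad_sq_avg x = (1 / real n) * (\<Sum>i=1..n. (norm (g i x))\<^sup>2)"

lemma n_pos: "real n > 0"
  using b_pos m_pos n_eq by simp

lemma f_avg_ge: "fbar \<le> f_avg x"
proof -
  have "(\<Sum>i=1..n. fbar) \<le> (\<Sum>i=1..n. f i x)"
    using lower by (intro sum_mono) auto
  then show ?thesis
    using n_pos unfolding f_avg_def by (simp add: field_simps)
qed

lemma grad_sq_avg_le: "grad_sq_avg x \<le> 2 * L * (f_avg x - fbar)"
proof -
  have "(\<Sum>i=1..n. (norm (g i x))\<^sup>2) \<le> (\<Sum>i=1..n. 2 * L * (f i x - fbar))"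
    using norm_gradient_sq_le[OF grad lip L_pos lower] by (intro sum_mono) auto
  also have "\<dots> = 2 * L * ((\<Sum>i=1..n. f i x) - real n * fbar)"
    by (simp add: sum_distrib_left sum_subtractf algebra_simps)
  finally show ?thesis
    using n_pos unfolding grad_sq_avg_def f_avg_def by (simp add: field_simps)
qed

lemma epoch_gap_sq_le_block_sums:
  fixes al :: real and p :: "nat \<Rightarrow> nat" and s :: "'a \<times> 'a"
  assumes al: "0 < al" "al \<le> (1 - be) * (1 - be ^ m) / (4 * L * real m)"
    and p: "p permutes {1..n}"
  defines "z \<equiv> rrm_z be s"
  shows "(norm (rrm_z be (rrm_epoch al be lam b m g p s) - snd (rrm_epoch al be lam b m g p s)))\<^sup>2
   \<le> (1 + 2 * be ^ m) / 3 * (norm (z - snd s))\<^sup>2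
     + be\<^sup>2 * al\<^sup>2 / ((1 - be)\<^sup>2 * (1 - be ^ m))
       * (2 * (norm (block_sum b m (\<lambda>l. be ^ (m - 1 - l)) p (\<lambda>j. g j z)))\<^sup>2
          + 2 / (3 * real m) * (\<Sum>i<m. (norm (block_sum b m (rrm_weight be lam i) p (\<lambda>j. g j z)))\<^sup>2))"
proof -
  interpret epoch: rrm_one_epoch al be lam L b m n g p s
    using b_pos m_pos n_eq p lip L_pos be_nonneg be_less_1 lam_nonneg lam_le al
    by unfold_locales auto
  have "(be * epoch.\<kappa>)\<^sup>2 = be\<^sup>2 * al\<^sup>2 / (1 - be)\<^sup>2"
    unfolding epoch.\<kappa>_def by (simp add: power2_eq_square)
  then show ?thesis
    using epoch.epoch_gap_sq_le
    unfolding epoch.M_def epoch.X_def z_def epoch.z_eq[symmetric] by (simp add: field_simps)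
qed

lemma rrm_weights_bounded:
  "0 \<le> be ^ (m - 1 - l) \<and> be ^ (m - 1 - l) \<le> 1"
  "0 \<le> rrm_weight be lam i l \<and> rrm_weight be lam i l \<le> 1"
  using be_nonneg be_less_1 rrm_weight_bounds[OF be_nonneg be_less_1 lam_nonneg lam_le]
  by (auto intro: power_le_one)

lemma mean_block_sum_bound_le:
  "8 / 3 * ((real m)\<^sup>2 * (norm (grad_avg x))\<^sup>2 + real m / real b * grad_sq_avg x)
     \<le> (real m)\<^sup>2 * (4 * (norm (grad_avg x))\<^sup>2 + 7 * L * (f_avg x - fbar) / real n)"
proof -
  have m_div_b: "real m / real b = (real m)\<^sup>2 / real n"
    using n_eq m_pos by (simp add: power2_eq_square)
  have "8 / 3 * grad_sq_avg x \<le> 7 * (L * (f_avg x - fbar))"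
    using grad_sq_avg_le[of x] mult_nonneg_nonneg[of L "f_avg x - fbar"] f_avg_ge[of x] L_pos
    by linarith
  from mult_left_mono[OF this, of "real m / real b"]
  have "real m / real b * (8 / 3 * grad_sq_avg x) \<le> (real m)\<^sup>2 / real n * (7 * (L * (f_avg x - fbar)))"
    unfolding m_div_b by simp
  moreover have "8 / 3 * ((real m)\<^sup>2 * (norm (grad_avg x))\<^sup>2) \<le> 4 * ((real m)\<^sup>2 * (norm (grad_avg x))\<^sup>2)"
    by simp
  moreover have "8 / 3 * ((real m)\<^sup>2 * (norm (grad_avg x))\<^sup>2 + real m / real b * grad_sq_avg x)
      = 8 / 3 * ((real m)\<^sup>2 * (norm (grad_avg x))\<^sup>2) + real m / real b * (8 / 3 * grad_sq_avg x)"
    by (simp add: algebra_simps)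
  moreover have "(real m)\<^sup>2 * (4 * (norm (grad_avg x))\<^sup>2 + 7 * L * (f_avg x - fbar) / real n)
      = 4 * ((real m)\<^sup>2 * (norm (grad_avg x))\<^sup>2) + (real m)\<^sup>2 / real n * (7 * (L * (f_avg x - fbar)))"
    by (simp add: distrib_left mult_ac)
  ultimately show ?thesis
    by linarith
qed

lemma rrm_epoch_gap_sq_le:
  fixes al :: real and p :: "nat \<Rightarrow> nat" and s :: "'a \<times> 'a"
  assumes al: "0 < al" "al \<le> (1 - be) * (1 - be ^ m) / (4 * L * real m)"
    and p: "p permutes {1..n}"
  defines "z \<equiv> rrm_z be s"
  shows "(norm (rrm_z be (rrm_epoch al be lam b m g p s) - snd (rrm_epoch al be lam b m g p s)))\<^sup>2
   \<le> (1 + 2 * be ^ m) / 3 * (norm (z - snd s))\<^sup>2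
     + be\<^sup>2 * (real m)\<^sup>2 * al\<^sup>2 * (4 * (norm (grad_avg z))\<^sup>2 + 7 * L * (f_avg z - fbar))
       / ((1 - be)\<^sup>2 * (1 - be ^ m))"
proof -
  let ?K = "(real m)\<^sup>2 * grad_sq_avg z"
  have "2 * (norm (block_sum b m (\<lambda>l. be ^ (m - 1 - l)) p (\<lambda>j. g j z)))\<^sup>2
       + 2 / (3 * real m) * (\<Sum>i<m. (norm (block_sum b m (rrm_weight be lam i) p (\<lambda>j. g j z)))\<^sup>2)
      \<le> 8 / 3 * ?K"
    unfolding grad_sq_avg_def
    by (intro two_plus_scaled_sum_le m_pos block_sum_norm_sq_le[OF n_eq b_pos p] rrm_weights_bounded)
  also have "\<dots> = (real m)\<^sup>2 * (8 / 3 * grad_sq_avg z)"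
    by simp
  also have "\<dots> \<le> (real m)\<^sup>2 * (4 * (norm (grad_avg z))\<^sup>2 + 7 * L * (f_avg z - fbar))"
  proof (rule mult_left_mono)
    have "0 \<le> L * (f_avg z - fbar)"
      using L_pos f_avg_ge[of z] by simp
    then show "8 / 3 * grad_sq_avg z \<le> 4 * (norm (grad_avg z))\<^sup>2 + 7 * L * (f_avg z - fbar)"
      using grad_sq_avg_le[of z] zero_le_power2[of "norm (grad_avg z)"] by linarith
  qed simp
  finally have bracket: "2 * (norm (block_sum b m (\<lambda>l. be ^ (m - 1 - l)) p (\<lambda>j. g j z)))\<^sup>2
       + 2 / (3 * real m) * (\<Sum>i<m. (norm (block_sum b m (rrm_weight be lam i) p (\<lambda>j. g j z)))\<^sup>2)
      \<le> (real m)\<^sup>2 * (4 * (norm (grad_avg z))\<^sup>2 + 7 * L * (f_avg z - fbar))" .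
  have "0 \<le> be\<^sup>2 * al\<^sup>2 / ((1 - be)\<^sup>2 * (1 - be ^ m))"
    using be_nonneg be_less_1 by (simp add: power_le_one)
  from order_trans[OF epoch_gap_sq_le_block_sums[OF al p, of s, folded z_def]
      add_left_mono[OF mult_left_mono[OF bracket this]]]
  show ?thesis by (simp add: mult_ac)
qed

lemma rrm_epoch_mean_gap_sq_le:
  fixes al :: real and s :: "'a \<times> 'a"
  assumes al: "0 < al" "al \<le> (1 - be) * (1 - be ^ m) / (4 * L * real m)"
  defines "z \<equiv> rrm_z be s" and "P \<equiv> {p. p permutes {1..n}}"
  shows "(1 / real (card P)) * (\<Sum>p\<in>P.
       (norm (rrm_z be (rrm_epoch al be lam b m g p s) - snd (rrm_epoch al be lam b m g p s)))\<^sup>2)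
   \<le> (1 + 2 * be ^ m) / 3 * (norm (z - snd s))\<^sup>2
     + be\<^sup>2 * (real m)\<^sup>2 * al\<^sup>2 * (4 * (norm (grad_avg z))\<^sup>2 + 7 * L * (f_avg z - fbar) / real n)
       / ((1 - be)\<^sup>2 * (1 - be ^ m))"
proof -
  define A where "A = be\<^sup>2 * al\<^sup>2 / ((1 - be)\<^sup>2 * (1 - be ^ m))"
  let ?E = "(1 + 2 * be ^ m) / 3 * (norm (z - snd s))\<^sup>2"
  let ?M = "\<lambda>p. (norm (block_sum b m (\<lambda>l. be ^ (m - 1 - l)) p (\<lambda>j. g j z)))\<^sup>2"
  let ?X = "\<lambda>p i. (norm (block_sum b m (rrm_weight be lam i) p (\<lambda>j. g j z)))\<^sup>2"
  let ?B = "(real m)\<^sup>2 * (norm (grad_avg z))\<^sup>2 + (real m / real b) * grad_sq_avg z"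
  define cP where "cP = real (card P)"
  have cP_pos: "cP > 0"
    using finite_permutations[of "{1..n}"] permutes_id[of "{1..n}"]
    unfolding cP_def P_def by (subst of_nat_0_less_iff, subst card_gt_0_iff) blast
  have A_nonneg: "0 \<le> A"
    using be_nonneg be_less_1 unfolding A_def by (simp add: power_le_one)
  have "2 * (\<Sum>p\<in>P. ?M p) + 2 / (3 * real m) * (\<Sum>i<m. \<Sum>p\<in>P. ?X p i) \<le> 8 / 3 * (cP * ?B)"
    unfolding cP_def P_def grad_avg_def grad_sq_avg_def
    by (intro two_plus_scaled_sum_le m_pos
        sum_permutations_block_sum_norm_sq_le[OF n_eq b_pos m_pos] rrm_weights_bounded)
  then have "cP * ?E + A * (2 * (\<Sum>p\<in>P. ?M p) + 2 / (3 * real m) * (\<Sum>i<m. \<Sum>p\<in>P. ?X p i))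
      \<le> cP * ?E + A * (8 / 3 * (cP * ?B))"
    by (intro add_left_mono mult_left_mono A_nonneg)
  moreover have "(\<Sum>p\<in>P. ?E + A * (2 * ?M p + 2 / (3 * real m) * (\<Sum>i<m. ?X p i)))
      = cP * ?E + A * (2 * (\<Sum>p\<in>P. ?M p) + 2 / (3 * real m) * (\<Sum>i<m. \<Sum>p\<in>P. ?X p i))"
    unfolding cP_def by (simp add: sum.distrib sum_distrib_left distrib_left sum.swap[of _ P])
  ultimately have "(\<Sum>p\<in>P. ?E + A * (2 * ?M p + 2 / (3 * real m) * (\<Sum>i<m. ?X p i)))
      \<le> cP * (?E + A * (8 / 3 * ?B))"
    by (simp add: algebra_simps)
  moreover have "(\<Sum>p\<in>P. (norm (rrm_z be (rrm_epoch al be lam b m g p s) - snd (rrm_epoch al be lam b m g p s)))\<^sup>2)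
      \<le> (\<Sum>p\<in>P. ?E + A * (2 * ?M p + 2 / (3 * real m) * (\<Sum>i<m. ?X p i)))"
    using epoch_gap_sq_le_block_sums[OF al, of _ s] unfolding A_def P_def z_def by (intro sum_mono) auto
  ultimately have mean_le: "(1 / cP) * (\<Sum>p\<in>P. (norm (rrm_z be (rrm_epoch al be lam b m g p s)
      - snd (rrm_epoch al be lam b m g p s)))\<^sup>2) \<le> ?E + A * (8 / 3 * ?B)"
    using cP_pos by (simp add: field_simps)
  from order_trans[OF mean_le add_left_mono[OF mult_left_mono[OF mean_block_sum_bound_le A_nonneg]]]
  show ?thesis
    unfolding A_def cP_def by (simp add: mult_ac)
qed

end

theorem lemmaB4:
  fixes f :: "nat \<Rightarrow> 'a::euclidean_space \<Rightarrow> real"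
    and g :: "nat \<Rightarrow> 'a \<Rightarrow> 'a"
    and n b m :: nat
    and L fbar beta lam :: real
    and alpha :: "nat \<Rightarrow> real"
    and perm :: "nat \<Rightarrow> nat \<Rightarrow> nat"
    and x1 :: 'a
  assumes n_pos: "n \<ge> 1" and b_pos: "b \<ge> 1" and nbm: "n = b * m"
    and grad: "\<And>i x. i \<in> {1..n} \<Longrightarrow> (f i has_derivative (\<lambda>h. g i x \<bullet> h)) (at x)"
    and L_pos: "L > 0"
    and lip: "\<And>i x y. i \<in> {1..n} \<Longrightarrow> norm (g i x - g i y) \<le> L * norm (x - y)"
    and lowb: "\<And>i x. i \<in> {1..n} \<Longrightarrow> f i x \<ge> fbar"
    and beta: "0 \<le> beta" "beta < 1"
    and lam: "0 \<le> lam" "lam \<le> beta / (1 - beta)"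
    and step: "\<And>k. k \<ge> 1 \<Longrightarrow> 0 < alpha k \<and>
                   alpha k \<le> (1 - beta) * (1 - beta ^ m) / (4 * L * real m)"
    and perms: "\<And>k. perm k permutes {1..n}"
  shows
   "(\<forall>k\<ge>1.
      (let sk = rrm_seq alpha beta lam b m g perm x1 k;
           sk1 = rrm_seq alpha beta lam b m g perm x1 (Suc k);
           zk = rrm_z beta sk;
           gradf = (1 / real n) *\<^sub>R (\<Sum>i=1..n. g i zk);
           fz = (1 / real n) * (\<Sum>i=1..n. f i zk);
           eta = (1 + 2 * beta ^ m) / 3
       in (norm (rrm_z beta sk1 - snd sk1))\<^sup>2
          \<le> eta * (norm (zk - snd sk))\<^sup>2
            + beta\<^sup>2 * (real m)\<^sup>2 * (alpha k)\<^sup>2 * (4 * (norm gradf)\<^sup>2 + 7 * L * (fz - fbar))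
              / ((1 - beta)\<^sup>2 * (1 - beta ^ m))))
    \<and>
    (\<forall>k\<ge>1.
      (let sk = rrm_seq alpha beta lam b m g perm x1 k;
           zk = rrm_z beta sk;
           gradf = (1 / real n) *\<^sub>R (\<Sum>i=1..n. g i zk);
           fz = (1 / real n) * (\<Sum>i=1..n. f i zk);
           eta = (1 + 2 * beta ^ m) / 3;
           P = {p. p permutes {1..n}}
       in (1 / real (card P)) *
            (\<Sum>p\<in>P. (let sk1 = rrm_seq alpha beta lam b m g (perm(k := p)) x1 (Suc k)
                       in (norm (rrm_z beta sk1 - snd sk1))\<^sup>2))
          \<le> eta * (norm (zk - snd sk))\<^sup>2
            + beta\<^sup>2 * (real m)\<^sup>2 * (alpha k)\<^sup>2
                * (4 * (norm gradf)\<^sup>2 + 7 * L * (fz - fbar) / real n)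
              / ((1 - beta)\<^sup>2 * (1 - beta ^ m))))"
proof -
  have m_pos: "m \<ge> 1"
    using n_pos nbm by (cases m) auto
  interpret rrm_problem f g n b m L fbar beta lam
    using b_pos m_pos nbm grad L_pos lip lowb beta lam by unfold_locales auto
  show ?thesis
    unfolding Let_def
  proof (intro conjI allI impI, goal_cases)
    case (1 k)
    then show ?case
      using rrm_epoch_gap_sq_le[OF _ _ perms] step
      unfolding rrm_seq_Suc[OF 1] f_avg_def grad_avg_def by blast
  next
    case (2 k)
    have "rrm_seq alpha beta lam b m g (perm(k := p)) x1 (Suc k)
        = rrm_epoch (alpha k) beta lam b m g p (rrm_seq alpha beta lam b m g perm x1 k)" for p
      by (simp only: rrm_seq_Suc[OF 2] rrm_seq_fun_upd[OF order_refl] fun_upd_same)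
    then show ?case
      using rrm_epoch_mean_gap_sq_le step[OF 2] unfolding f_avg_def grad_avg_def by simp
  qed
qed

end
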